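(* Let $G$ be a finite group acting (via a homomorphism $\Gamma_G: G \to S_A$) on a finite set $A = X \sqcup Y$ of cardinality $n$, and suppose the action is partition-preserving. Let $\Omega = \Omega_X \sqcup \Omega_Y$ be a set of colors, with weight functions $\omega_X:\Omega_X\to\mathbb{N}^+$ and $\omega_Y:\Omega_Y\to\mathbb{N}^+$ having only finitely many colors of each weight, and let $f_X$, $f_Y$ be their generating functions. Let $\Phi$ be the set of valid colorings of $A$. Then the action of $G$ on $A$ induces an action on $\Phi$ given by $(g\varphi)(a) = \varphi(ga)$, and, as formal power series, $$\sum_{w\ge 0} \#\{\text{orbits of } G \text{ on } \Phi \text{ consisting of colorings of total weight } w\}\, x^w \;=\; \tilde Z_G\big(f_X(x), f_X(x^2),\ldots, f_X(x^n), f_Y(x), f_Y(x^2),\ldots, f_Y(x^n)\big).$$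
   Context: For a finite set $A$, $S_A$ is the group of bijections $A\to A$; every element of $S_A$ decomposes uniquely (up to order) into pairwise disjoint cycles. An action $\Gamma_G$ of $G$ on $A = X\sqcup Y$ is partition-preserving if for all $g\in G$ and $a\in A$: $ga\in X \iff a\in X$ and $ga\in Y\iff a\in Y$; equivalently every cycle of every $\Gamma_G(g)$ lies entirely in $X$ or entirely in $Y$. For $g\in G$, $C_k^X(g)$ (resp. $C_k^Y(g)$) denotes the number of $k$-cycles in the disjoint cycle decomposition of $\Gamma_G(g)$ contained in $X$ (resp. $Y$), where fixed points count as 1-cycles. The bipartite cycle index is the polynomial $$\tilde Z_G(x_1,\ldots,x_n,y_1,\ldots,y_n) = \frac{1}{|G|}\sum_{g\in G} x_1^{C_1^X(g)}\cdots x_n^{C_n^X(g)}\, y_1^{C_1^Y(g)}\cdots y_n^{C_n^Y(g)}.$$ For a weight function $\omega:\Omega'\to\mathbb{N}$ with $|\omega^{-1}(i)|$ finite for all $i$, its generating function is $f_\omega(x)=\sum_{i\ge 0}|\omega^{-1}(i)|\,x^i$. A coloring $\varphi: A\to\Omega_X\sqcup\Omega_Y$ is valid if $\varphi(a)\in\Omega_X\iff a\in X$ and $\varphi(a)\in\Omega_Y\iff a\in Y$. The total weight of a valid coloring $\varphi$ is $\sum_{a\in X}\omega_X(\varphi(a)) + \sum_{a\in Y}\omega_Y(\varphi(a))$. *)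

theory Defs
  imports "HOL-Algebra.Group_Action" "HOL-Computational_Algebra.Formal_Power_Series"
begin

definition cyc :: "('a \<Rightarrow> 'a) \<Rightarrow> 'a \<Rightarrow> 'a set" where
  "cyc s a = {(s ^^ i) a | i. True}"

definition cycle_count :: "'a set \<Rightarrow> nat \<Rightarrow> ('a \<Rightarrow> 'a) \<Rightarrow> nat" where
  "cycle_count B k s = card {cyc s a | a. a \<in> B \<and> cyc s a \<subseteq> B \<and> card (cyc s a) = k}"

definition bip_cycle_index ::
  "('g, 'm) monoid_scheme \<Rightarrow> ('g \<Rightarrow> 'a \<Rightarrow> 'a) \<Rightarrow> 'a set \<Rightarrow> 'a set
     \<Rightarrow> (nat \<Rightarrow> 'r::field fps) \<Rightarrow> (nat \<Rightarrow> 'r fps) \<Rightarrow> 'r fps" where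
  "bip_cycle_index G \<Gamma> X Y xs ys =
     fps_const (1 / of_nat (card (carrier G))) *
     (\<Sum>g\<in>carrier G. \<Prod>k\<in>{1..card (X \<union> Y)}.
        xs k ^ cycle_count X k (\<Gamma> g) * ys k ^ cycle_count Y k (\<Gamma> g))"

definition gen_fun :: "'c set \<Rightarrow> ('c \<Rightarrow> nat) \<Rightarrow> 'r::semiring_1 fps" where
  "gen_fun \<Omega> \<omega> = Abs_fps (\<lambda>i. of_nat (card {c \<in> \<Omega>. \<omega> c = i}))"

definition valid_colorings :: "'a set \<Rightarrow> 'a set \<Rightarrow> 'c set \<Rightarrow> 'c set \<Rightarrow> ('a \<Rightarrow> 'c) set" where
  "valid_colorings X Y \<Omega>X \<Omega>Y =
     {\<phi> \<in> (X \<union> Y) \<rightarrow>\<^sub>E (\<Omega>X \<union> \<Omega>Y).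
        \<forall>a \<in> X \<union> Y. (\<phi> a \<in> \<Omega>X \<longleftrightarrow> a \<in> X) \<and> (\<phi> a \<in> \<Omega>Y \<longleftrightarrow> a \<in> Y)}"

definition total_weight :: "'a set \<Rightarrow> 'a set \<Rightarrow> ('c \<Rightarrow> nat) \<Rightarrow> ('c \<Rightarrow> nat) \<Rightarrow> ('a \<Rightarrow> 'c) \<Rightarrow> nat" where
  "total_weight X Y \<omega>X \<omega>Y \<phi> = (\<Sum>a\<in>X. \<omega>X (\<phi> a)) + (\<Sum>a\<in>Y. \<omega>Y (\<phi> a))"

definition col_act :: "('g \<Rightarrow> 'a \<Rightarrow> 'a) \<Rightarrow> 'a set \<Rightarrow> 'g \<Rightarrow> ('a \<Rightarrow> 'c) \<Rightarrow> ('a \<Rightarrow> 'c)" where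
  "col_act \<Gamma> A g \<phi> = (\<lambda>a\<in>A. \<phi> (\<Gamma> g a))"

definition col_orbits ::
  "('g, 'm) monoid_scheme \<Rightarrow> ('g \<Rightarrow> 'a \<Rightarrow> 'a) \<Rightarrow> 'a set \<Rightarrow> ('a \<Rightarrow> 'c) set \<Rightarrow> ('a \<Rightarrow> 'c) set set" where
  "col_orbits G \<Gamma> A \<Phi> = {{col_act \<Gamma> A g \<phi> | g. g \<in> carrier G} | \<phi>. \<phi> \<in> \<Phi>}"

end

theory Submission
  imports Defs "HOL-Combinatorics.Permutations"
begin

(* By Burnside's lemma, applied to the finitely many valid colorings of a fixed total weight w,
   the number of orbits of weight w is the average over g of the number of g-invariant colorings
   of weight w. A coloring is invariant under g exactly when it is constant on every cycle of
   the permutation induced by g. As the action preserves X and Y, each cycle of length k lies in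
   X or in Y and receives a single color of the corresponding palette, which contributes k times
   its weight. So the g-invariant colorings have the generating function
   prod_k f_X(x^k)^(C_k^X(g)) f_Y(x^k)^(C_k^Y(g)), the term of g in the bipartite cycle index. *)

unbundle fps_syntax

section \<open>Generating functions of weighted sets\<close>

lemma fps_compose_X_power_nth:
  assumes "0 < k"
  shows "(a oo fps_X ^ k) $ n = (if k dvd n then a $ (n div k) else (0::'r::comm_semiring_1))"
proof -
  have "(a oo fps_X ^ k) $ n = (\<Sum>i\<in>{0..n} \<inter> {i. n = k * i}. a $ i)"
    by (simp add: fps_compose_nth power_mult[symmetric] sum.inter_restrict if_distrib cong: if_cong)
  also have "{0..n} \<inter> {i. n = k * i} = (if k dvd n then {n div k} else {})"
    using assms by (cases "k dvd n") (auto elim!: dvdE)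
  finally show ?thesis
    by simp
qed

lemma gen_fun_nth [simp]: "gen_fun S w $ n = of_nat (card {x \<in> S. w x = n})"
  by (simp add: gen_fun_def)

lemma gen_fun_cong:
  assumes "S = T" "\<And>x. x \<in> T \<Longrightarrow> v x = w x"
  shows "gen_fun S v = gen_fun T w"
proof -
  have "{x \<in> S. v x = n} = {x \<in> T. w x = n}" for n
    using assms by auto
  then show ?thesis
    by (simp add: gen_fun_def)
qed

lemma gen_fun_bij_betw:
  assumes "bij_betw h S T"
  shows "gen_fun T w = gen_fun S (w \<circ> h)"
proof (rule fps_ext)
  fix n
  have "bij_betw h {x \<in> S. w (h x) = n} {y \<in> T. w y = n}"
    using assms by (auto simp: bij_betw_def inj_on_def)
  then show "gen_fun T w $ n = gen_fun S (w \<circ> h) $ n"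
    by (simp add: bij_betw_same_card)
qed

lemma gen_fun_scale_weight:
  assumes "0 < k"
  shows "gen_fun S (\<lambda>x. k * w x) = (gen_fun S w oo fps_X ^ k :: 'r::comm_semiring_1 fps)"
proof (rule fps_ext)
  fix n
  have "{x \<in> S. k * w x = n} = (if k dvd n then {x \<in> S. w x = n div k} else {})"
    using assms by (cases "k dvd n") (auto elim!: dvdE)
  then show "gen_fun S (\<lambda>x. k * w x) $ n = (gen_fun S w oo fps_X ^ k :: 'r fps) $ n"
    using assms by (simp add: fps_compose_X_power_nth)
qed

lemma finite_PiE_weight_fibre:
  fixes w :: "'i \<Rightarrow> 'x \<Rightarrow> nat"
  assumes "finite I" "\<And>i n. i \<in> I \<Longrightarrow> finite {x \<in> S i. w i x = n}"
  shows "finite {f \<in> PiE I S. (\<Sum>i\<in>I. w i (f i)) = n}"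
proof (rule finite_subset)
  show "{f \<in> PiE I S. (\<Sum>i\<in>I. w i (f i)) = n} \<subseteq> PiE I (\<lambda>i. \<Union>m\<le>n. {x \<in> S i. w i x = m})"
    using assms(1) by (auto simp: PiE_iff extensional_def intro: member_le_sum)
  show "finite (PiE I (\<lambda>i. \<Union>m\<le>n. {x \<in> S i. w i x = m}))"
    using assms by (intro finite_PiE) auto
qed

lemma gen_fun_Times:
  fixes v :: "'a \<Rightarrow> nat" and w :: "'b \<Rightarrow> nat"
  assumes "\<And>n. finite {x \<in> S. v x = n}" "\<And>n. finite {y \<in> T. w y = n}"
  shows "gen_fun (S \<times> T) (\<lambda>(x, y). v x + w y) = (gen_fun S v * gen_fun T w :: 'r::comm_semiring_1 fps)"
proof (rule fps_ext)
  fix n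
  have "{p \<in> S \<times> T. (\<lambda>(x, y). v x + w y) p = n}
      = (\<Union>k\<in>{0..n}. {x \<in> S. v x = k} \<times> {y \<in> T. w y = n - k})"
    by force
  then have "card {p \<in> S \<times> T. (\<lambda>(x, y). v x + w y) p = n}
      = (\<Sum>k=0..n. card {x \<in> S. v x = k} * card {y \<in> T. w y = n - k})"
    using assms by (simp add: card_UN_disjoint card_cartesian_product disjoint_iff)
  then show "gen_fun (S \<times> T) (\<lambda>(x, y). v x + w y) $ n = (gen_fun S v * gen_fun T w :: 'r fps) $ n"
    by (simp add: fps_mult_nth)
qed

lemma gen_fun_PiE:
  fixes w :: "'i \<Rightarrow> 'x \<Rightarrow> nat"
  assumes "finite I" "\<And>i n. i \<in> I \<Longrightarrow> finite {x \<in> S i. w i x = n}"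
  shows "gen_fun (PiE I S) (\<lambda>f. \<Sum>i\<in>I. w i (f i))
       = (\<Prod>i\<in>I. gen_fun (S i) (w i) :: 'r::comm_semiring_1 fps)"
  using assms
proof (induction I rule: finite_induct)
  case empty
  show ?case
    by (rule fps_ext) (simp add: fps_one_nth)
next
  case (insert j I)
  let ?upd = "\<lambda>(y, g). g(j := y)"
  have bij: "bij_betw ?upd (S j \<times> PiE I S) (PiE (insert j I) S)"
    unfolding bij_betw_def using insert.hyps(2) by (simp add: inj_combinator PiE_insert_eq)
  have weight_upd: "(\<Sum>i\<in>insert j I. w i (?upd p i)) = (\<lambda>(y, g). w j y + (\<Sum>i\<in>I. w i (g i))) p"
    for p
    using insert.hyps by (auto intro!: sum.cong split: prod.split)
  have "gen_fun (PiE (insert j I) S) (\<lambda>f. \<Sum>i\<in>insert j I. w i (f i))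
      = gen_fun (S j \<times> PiE I S) (\<lambda>(y, g). w j y + (\<Sum>i\<in>I. w i (g i)))"
    using bij by (simp add: gen_fun_bij_betw comp_def weight_upd)
  also have "\<dots> = gen_fun (S j) (w j) * (gen_fun (PiE I S) (\<lambda>g. \<Sum>i\<in>I. w i (g i)) :: 'r fps)"
    using insert by (intro gen_fun_Times finite_PiE_weight_fibre) auto
  finally show ?case
    using insert by simp
qed

section \<open>Cycles of a permutation of a finite set\<close>

lemma cyc_self: "a \<in> cyc s a"
  unfolding cyc_def by (auto intro!: exI[of _ 0])

lemma cyc_step: "s a \<in> cyc s a"
  unfolding cyc_def by (auto intro!: exI[of _ 1])

lemma cyc_trans:
  assumes "b \<in> cyc s a"
  shows "cyc s b \<subseteq> cyc s a"
proof
  fix c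
  assume "c \<in> cyc s b"
  then obtain i j where "b = (s ^^ i) a" "c = (s ^^ j) b"
    using assms by (auto simp: cyc_def)
  then have "c = (s ^^ (j + i)) a"
    by (simp add: funpow_add)
  then show "c \<in> cyc s a"
    by (auto simp: cyc_def)
qed

lemma cyc_subset:
  assumes "s ` B \<subseteq> B" "a \<in> B"
  shows "cyc s a \<subseteq> B"
proof -
  have "(s ^^ i) a \<in> B" for i
    using assms by (induction i) auto
  then show ?thesis
    unfolding cyc_def by auto
qed

lemma bij_betw_funpow_periodic:
  assumes "finite A" "bij_betw s A A" "a \<in> A"
  obtains n where "0 < n" "(s ^^ n) a = a"
proof -
  let ?p = "restrict_id s A"
  have "permutation ?p"
    using assms by (auto intro: permutes_imp_permutation permutes_restrict_id)
  then obtain n where n: "0 < n" "(?p ^^ n) a = a"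
    by (rule permutation_self)
  have "(?p ^^ m) a = (s ^^ m) a \<and> (s ^^ m) a \<in> A" for m
    using assms by (induction m) (auto simp: bij_betw_def)
  with n show thesis
    using that[of n] by simp
qed

lemma cyc_sym:
  assumes "finite A" "bij_betw s A A" "a \<in> A" "b \<in> cyc s a"
  shows "a \<in> cyc s b"
proof -
  obtain i where b: "b = (s ^^ i) a"
    using assms(4) by (auto simp: cyc_def)
  obtain n where n: "0 < n" "(s ^^ n) a = a"
    using bij_betw_funpow_periodic assms(1-3) .
  have "(s ^^ (n * i - i)) b = (s ^^ (n * i - i + i)) a"
    unfolding b funpow_add by simp
  also have "n * i - i + i = n * i"
    using n(1) by simp
  also have "(s ^^ (n * i)) a = a"
    using funpow_mod_eq[OF n(2), of "n * i"] by simp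
  finally have "(s ^^ (n * i - i)) b = a" .
  then show ?thesis
    unfolding cyc_def by blast
qed

lemma cyc_eq:
  assumes "finite A" "bij_betw s A A" "a \<in> A" "b \<in> cyc s a"
  shows "cyc s b = cyc s a"
  using cyc_trans[OF assms(4)] cyc_trans[OF cyc_sym[OF assms]] by (rule equalityI)

lemma cyc_fibre:
  assumes "finite A" "bij_betw s A A" "c \<in> cyc s ` A"
  shows "{x \<in> A. cyc s x = c} = c"
proof -
  obtain a where a: "a \<in> A" "c = cyc s a"
    using assms(3) by blast
  have "c \<subseteq> A"
    using a cyc_subset[of s A] assms(2) by (simp add: bij_betw_def)
  moreover have "cyc s x = c" if "x \<in> c" for x
    using cyc_eq[OF assms(1,2) a(1)] that a(2) by simp
  ultimately show ?thesis
    using cyc_self by auto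
qed

lemma sum_over_cycles:
  assumes "finite A" "bij_betw s A A"
  shows "(\<Sum>a\<in>A. F (cyc s a)) = (\<Sum>c\<in>cyc s ` A. card c * F c)"
proof -
  have "(\<Sum>a\<in>A. F (cyc s a)) = (\<Sum>c\<in>cyc s ` A. \<Sum>a\<in>{x \<in> A. cyc s x = c}. F (cyc s a))"
    using assms(1) by (rule sum.image_gen)
  also have "\<dots> = (\<Sum>c\<in>cyc s ` A. \<Sum>a\<in>{x \<in> A. cyc s x = c}. F c)"
    by (intro sum.cong) auto
  also have "\<dots> = (\<Sum>c\<in>cyc s ` A. card c * F c)"
    by (intro sum.cong) (simp_all add: cyc_fibre[OF assms])
  finally show ?thesis .
qed

lemma image_cyc_invariant:
  assumes "\<forall>a\<in>A. f (s a) = f a" "s ` A \<subseteq> A" "a \<in> A"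
  shows "f ` cyc s a = {f a}"
proof -
  have "f ((s ^^ i) a) = f a \<and> (s ^^ i) a \<in> A" for i
    using assms by (induction i) auto
  then show ?thesis
    using cyc_self[of a s] by (auto simp: cyc_def)
qed

lemma card_cyc_bounds:
  assumes "finite A" "s ` A \<subseteq> A" "a \<in> A"
  shows "card (cyc s a) \<in> {1..card A}"
proof -
  have sub: "cyc s a \<subseteq> A"
    using assms(2,3) by (rule cyc_subset)
  then have "0 < card (cyc s a)"
    using assms(1) cyc_self[of a s] card_gt_0_iff finite_subset by blast
  moreover have "card (cyc s a) \<le> card A"
    using assms(1) sub by (rule card_mono)
  ultimately show ?thesis
    by simp
qed

lemma lift_cyc_coloring:
  assumes "finite A" "bij_betw s A A" "h \<in> PiE (cyc s ` A) Q"
  shows "(\<lambda>a\<in>A. h (cyc s a)) \<in> {f \<in> PiE A (\<lambda>a. Q (cyc s a)). \<forall>a\<in>A. f (s a) = f a}"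
proof -
  have "(\<lambda>a\<in>A. h (cyc s a)) \<in> PiE A (\<lambda>a. Q (cyc s a))"
    unfolding restrict_PiE_iff using PiE_mem[OF assms(3)] by blast
  moreover have "(\<lambda>a\<in>A. h (cyc s a)) (s a) = (\<lambda>a\<in>A. h (cyc s a)) a" if "a \<in> A" for a
  proof -
    have "s a \<in> A"
      using that assms(2) by (auto simp: bij_betw_def)
    moreover have "cyc s (s a) = cyc s a"
      using cyc_eq[OF assms(1,2) that cyc_step] .
    ultimately show ?thesis
      using that by simp
  qed
  ultimately show ?thesis
    by blast
qed

lemma bij_betw_cyc_colorings:
  assumes "finite A" "bij_betw s A A"
  shows "bij_betw (\<lambda>h. \<lambda>a\<in>A. h (cyc s a)) (PiE (cyc s ` A) Q)
           {f \<in> PiE A (\<lambda>a. Q (cyc s a)). \<forall>a\<in>A. f (s a) = f a}"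
    (is "bij_betw ?lift _ ?Inv")
proof (rule bij_betwI[where g = "\<lambda>f. \<lambda>c\<in>cyc s ` A. the_elem (f ` c)"])
  have sA: "s ` A \<subseteq> A"
    using assms(2) by (simp add: bij_betw_def)
  have elem: "the_elem (f ` cyc s a) = f a" if "f \<in> ?Inv" "a \<in> A" for f a
    using that image_cyc_invariant[OF _ sA, of f a] by simp
  show "?lift \<in> PiE (cyc s ` A) Q \<rightarrow> ?Inv"
    using lift_cyc_coloring[OF assms] by (rule Pi_I)
  show "(\<lambda>f. \<lambda>c\<in>cyc s ` A. the_elem (f ` c)) \<in> ?Inv \<rightarrow> PiE (cyc s ` A) Q"
  proof
    fix f
    assume f: "f \<in> ?Inv"
    have "the_elem (f ` cyc s a) \<in> Q (cyc s a)" if "a \<in> A" for a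
      using elem[OF f that] PiE_mem[of f A "\<lambda>a. Q (cyc s a)" a] f that by simp
    then show "(\<lambda>c\<in>cyc s ` A. the_elem (f ` c)) \<in> PiE (cyc s ` A) Q"
      unfolding restrict_PiE_iff by blast
  qed
  show "(\<lambda>c\<in>cyc s ` A. the_elem (?lift h ` c)) = h" if h: "h \<in> PiE (cyc s ` A) Q" for h
  proof -
    have "the_elem (?lift h ` c) = h c" if "c \<in> cyc s ` A" for c
      using that elem[OF lift_cyc_coloring[OF assms h]] by auto
    then have "(\<lambda>c\<in>cyc s ` A. the_elem (?lift h ` c)) = (\<lambda>c\<in>cyc s ` A. h c)"
      by (rule restrict_ext)
    also have "\<dots> = h"
      using h by (rule PiE_restrict)
    finally show ?thesis .
  qed
  show "?lift (\<lambda>c\<in>cyc s ` A. the_elem (f ` c)) = f" if f: "f \<in> ?Inv" for f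
  proof -
    have "(\<lambda>c\<in>cyc s ` A. the_elem (f ` c)) (cyc s a) = f a" if "a \<in> A" for a
      using elem[OF f that] that by simp
    then have "?lift (\<lambda>c\<in>cyc s ` A. the_elem (f ` c)) = (\<lambda>a\<in>A. f a)"
      by (rule restrict_ext)
    also have "\<dots> = f"
      using f PiE_restrict by blast
    finally show ?thesis .
  qed
qed

lemma gen_fun_invariant_colorings:
  fixes V :: "'a set \<Rightarrow> 'c \<Rightarrow> nat"
  assumes "finite A" "bij_betw s A A" "\<And>c n. c \<in> cyc s ` A \<Longrightarrow> finite {x \<in> Q c. V c x = n}"
  shows "gen_fun {f \<in> PiE A (\<lambda>a. Q (cyc s a)). \<forall>a\<in>A. f (s a) = f a} (\<lambda>f. \<Sum>a\<in>A. V (cyc s a) (f a))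
       = (\<Prod>c\<in>cyc s ` A. gen_fun (Q c) (V c) oo fps_X ^ card c :: 'r::comm_semiring_1 fps)"
proof -
  have sA: "s ` A \<subseteq> A"
    using assms(2) by (simp add: bij_betw_def)
  have card_pos: "0 < card c" if "c \<in> cyc s ` A" for c
    using that card_cyc_bounds[OF assms(1) sA] by fastforce
  have "gen_fun {f \<in> PiE A (\<lambda>a. Q (cyc s a)). \<forall>a\<in>A. f (s a) = f a} (\<lambda>f. \<Sum>a\<in>A. V (cyc s a) (f a))
      = gen_fun (PiE (cyc s ` A) Q) (\<lambda>h. \<Sum>a\<in>A. V (cyc s a) (h (cyc s a)))"
    by (simp add: gen_fun_bij_betw[OF bij_betw_cyc_colorings[OF assms(1,2)]] comp_def)
  also have "\<dots> = gen_fun (PiE (cyc s ` A) Q) (\<lambda>h. \<Sum>c\<in>cyc s ` A. card c * V c (h c))"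
    using sum_over_cycles[OF assms(1,2), of "\<lambda>c. V c (h c)" for h] by simp
  also have "\<dots> = (\<Prod>c\<in>cyc s ` A. gen_fun (Q c) (\<lambda>x. card c * V c x))"
  proof (rule gen_fun_PiE)
    show "finite {x \<in> Q c. card c * V c x = n}" if "c \<in> cyc s ` A" for c n
      using assms(3)[OF that, of "n div card c"] card_pos[OF that] by (auto elim: finite_subset[rotated])
  qed (use assms(1) in simp)
  also have "\<dots> = (\<Prod>c\<in>cyc s ` A. gen_fun (Q c) (V c) oo fps_X ^ card c)"
    using card_pos by (intro prod.cong refl gen_fun_scale_weight)
  finally show ?thesis .
qed

lemma cycle_count_eq:
  assumes "s ` B \<subseteq> B"
  shows "cycle_count B k s = card {c \<in> cyc s ` B. card c = k}"
proof -
  have "{cyc s a | a. a \<in> B \<and> cyc s a \<subseteq> B \<and> card (cyc s a) = k} = {c \<in> cyc s ` B. card c = k}"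
    using cyc_subset[OF assms] by blast
  then show ?thesis
    by (simp add: cycle_count_def)
qed

lemma prod_group_by_card:
  fixes f :: "nat \<Rightarrow> 'r::comm_monoid_mult"
  assumes "finite D" "\<And>c. c \<in> D \<Longrightarrow> card c \<in> {1..n}"
  shows "(\<Prod>c\<in>D. f (card c)) = (\<Prod>k\<in>{1..n}. f k ^ card {c \<in> D. card c = k})"
proof -
  have "(\<Prod>c\<in>D. f (card c)) = (\<Prod>k\<in>{1..n}. \<Prod>c\<in>{c \<in> D. card c = k}. f (card c))"
    using assms by (intro prod.group[symmetric]) auto
  also have "\<dots> = (\<Prod>k\<in>{1..n}. f k ^ card {c \<in> D. card c = k})"
    by (intro prod.cong) auto
  finally show ?thesis .
qed

lemma prod_cycles_eq_cycle_monomial: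
  assumes "finite (X \<union> Y)" "X \<inter> Y = {}" "s ` X \<subseteq> X" "s ` Y \<subseteq> Y"
  shows "(\<Prod>c\<in>cyc s ` (X \<union> Y). if c \<subseteq> X then xs (card c) else ys (card c))
       = (\<Prod>k\<in>{1..card (X \<union> Y)}. xs k ^ cycle_count X k s * ys k ^ cycle_count Y k s :: 'r::comm_monoid_mult)"
proof -
  let ?n = "card (X \<union> Y)"
  have cyc_X: "cyc s a \<subseteq> X" if "a \<in> X" for a
    using assms(3) that by (rule cyc_subset)
  have cyc_Y: "\<not> cyc s a \<subseteq> X" if "a \<in> Y" for a
    using assms(2) cyc_self[of a s] that by blast
  have card_bounds: "card c \<in> {1..?n}" if "c \<in> cyc s ` (X \<union> Y)" for c
    using that card_cyc_bounds[OF assms(1)] assms(3,4) by blast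
  have "(\<Prod>c\<in>cyc s ` (X \<union> Y). if c \<subseteq> X then xs (card c) else ys (card c))
      = (\<Prod>c\<in>cyc s ` X. if c \<subseteq> X then xs (card c) else ys (card c))
        * (\<Prod>c\<in>cyc s ` Y. if c \<subseteq> X then xs (card c) else ys (card c))"
    using assms(1) cyc_X cyc_Y unfolding image_Un by (intro prod.union_disjoint) blast+
  also have "\<dots> = (\<Prod>c\<in>cyc s ` X. xs (card c)) * (\<Prod>c\<in>cyc s ` Y. ys (card c))"
    using cyc_X cyc_Y by (intro arg_cong2[where f = "(*)"] prod.cong) auto
  also have "\<dots> = (\<Prod>k\<in>{1..?n}. xs k ^ cycle_count X k s) * (\<Prod>k\<in>{1..?n}. ys k ^ cycle_count Y k s)"
    unfolding cycle_count_eq[OF assms(3)] cycle_count_eq[OF assms(4)]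
    using assms(1) card_bounds by (intro arg_cong2[where f = "(*)"] prod_group_by_card) auto
  also have "\<dots> = (\<Prod>k\<in>{1..?n}. xs k ^ cycle_count X k s * ys k ^ cycle_count Y k s)"
    by (rule prod.distrib[symmetric])
  finally show ?thesis .
qed

section \<open>Burnside's lemma for the induced action on colorings\<close>

lemma group_actionI:
  fixes G (structure)
  assumes "group G"
    and closed: "\<And>g x. g \<in> carrier G \<Longrightarrow> x \<in> E \<Longrightarrow> \<phi> g x \<in> E"
    and one: "\<And>x. x \<in> E \<Longrightarrow> \<phi> \<one> x = x"
    and mult: "\<And>g h x. g \<in> carrier G \<Longrightarrow> h \<in> carrier G \<Longrightarrow> x \<in> E \<Longrightarrow> \<phi> (g \<otimes> h) x = \<phi> g (\<phi> h x)"
  shows "group_action G E (\<lambda>g. \<lambda>x\<in>E. \<phi> g x)"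
proof -
  interpret group G by fact
  have Bij: "(\<lambda>x\<in>E. \<phi> g x) \<in> Bij E" if g: "g \<in> carrier G" for g
  proof -
    have "\<phi> (inv g) (\<phi> g x) = x" "\<phi> g (\<phi> (inv g) x) = x" if "x \<in> E" for x
      using g that by (simp_all flip: mult add: one)
    then have "bij_betw (\<phi> g) E E"
      using g closed by (intro bij_betwI[where g = "\<phi> (inv g)"]) auto
    then show ?thesis
      by (simp add: Bij_def)
  qed
  have "(\<lambda>g. \<lambda>x\<in>E. \<phi> g x) \<in> hom G (BijGroup E)"
  proof (rule homI)
    show "(\<lambda>x\<in>E. \<phi> g x) \<in> carrier (BijGroup E)" if "g \<in> carrier G" for g
      using Bij[OF that] by (simp add: BijGroup_def)
    show "(\<lambda>x\<in>E. \<phi> (g \<otimes> h) x) = (\<lambda>x\<in>E. \<phi> g x) \<otimes>\<^bsub>BijGroup E\<^esub> (\<lambda>x\<in>E. \<phi> h x)"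
      if "g \<in> carrier G" "h \<in> carrier G" for g h
      using that Bij closed by (simp add: BijGroup_def compose_def mult cong: restrict_cong)
  qed
  then show ?thesis
    unfolding group_action_def group_hom_def group_hom_axioms_def
    using group_BijGroup by (simp add: is_group)
qed

sublocale group_action \<subseteq> group G
  using group_hom by (rule group_hom.axioms(1))

lemma col_act_fixed_iff:
  assumes "f \<in> extensional A"
  shows "col_act \<Gamma> A g f = f \<longleftrightarrow> (\<forall>a\<in>A. f (\<Gamma> g a) = f a)"
proof
  assume "col_act \<Gamma> A g f = f"
  then have "col_act \<Gamma> A g f a = f a" for a
    by simp
  then show "\<forall>a\<in>A. f (\<Gamma> g a) = f a"
    unfolding col_act_def by (metis restrict_apply')
next
  assume "\<forall>a\<in>A. f (\<Gamma> g a) = f a"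
  then have "col_act \<Gamma> A g f = restrict f A"
    unfolding col_act_def by (intro restrict_ext) simp
  also have "\<dots> = f"
    using assms by (rule extensional_restrict)
  finally show "col_act \<Gamma> A g f = f" .
qed

lemma (in group_action) col_act_mult:
  assumes "g \<in> carrier G" "h \<in> carrier G"
  shows "col_act \<phi> E h (col_act \<phi> E g f) = col_act \<phi> E (g \<otimes> h) f"
proof -
  have "\<phi> h a \<in> E" if "a \<in> E" for a
    using assms(2) that refl by (rule element_image)
  then show ?thesis
    unfolding col_act_def using assms by (intro restrict_ext) (simp add: composition_rule)
qed

lemma (in group_action) col_act_one:
  assumes "f \<in> extensional E"
  shows "col_act \<phi> E \<one> f = f"
proof -
  have "\<phi> \<one> a = a" if "a \<in> E" for a
    using that by (simp flip: id_eq_one)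
  then show ?thesis
    using assms by (simp add: col_act_fixed_iff)
qed

lemma (in group_action) col_act_inv_fixed_iff:
  assumes "f \<in> extensional E" "g \<in> carrier G"
  shows "col_act \<phi> E (inv g) f = f \<longleftrightarrow> col_act \<phi> E g f = f"
proof -
  have "col_act \<phi> E g (col_act \<phi> E (inv g) f) = f" "col_act \<phi> E (inv g) (col_act \<phi> E g f) = f"
    using assms by (simp_all add: col_act_mult col_act_one)
  then show ?thesis
    by auto
qed

text \<open>By \<open>col_act_mult\<close> the induced action on colorings is a right action; acting by inverses
  turns it into the left action that \<open>group_action\<close> requires.\<close>

lemma (in group_action) coloring_action:
  assumes "\<Phi> \<subseteq> extensional E" "\<And>g f. g \<in> carrier G \<Longrightarrow> f \<in> \<Phi> \<Longrightarrow> col_act \<phi> E g f \<in> \<Phi>"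
  shows "group_action G \<Phi> (\<lambda>g. \<lambda>f\<in>\<Phi>. col_act \<phi> E (inv g) f)"
proof (rule group_actionI)
  show "col_act \<phi> E (inv \<one>) f = f" if "f \<in> \<Phi>" for f
    using that assms(1) col_act_one by auto
  show "col_act \<phi> E (inv (g \<otimes> h)) f = col_act \<phi> E (inv g) (col_act \<phi> E (inv h) f)"
    if "g \<in> carrier G" "h \<in> carrier G" for g h f
    using that by (simp add: col_act_mult inv_mult_group)
qed (use assms(2) is_group in auto)

lemma (in group_action) orbit_coloring_action:
  assumes f: "f \<in> \<Phi>"
  shows "orbit G (\<lambda>g. \<lambda>f\<in>\<Phi>. col_act \<phi> E (inv g) f) f = {col_act \<phi> E g f | g. g \<in> carrier G}"
proof (intro equalityI subsetI)
  fix f'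
  assume "f' \<in> orbit G (\<lambda>g. \<lambda>f\<in>\<Phi>. col_act \<phi> E (inv g) f) f"
  then obtain g where "g \<in> carrier G" "f' = col_act \<phi> E (inv g) f"
    using f by (auto simp: orbit_def)
  then show "f' \<in> {col_act \<phi> E g f | g. g \<in> carrier G}"
    using inv_closed by blast
next
  fix f'
  assume "f' \<in> {col_act \<phi> E g f | g. g \<in> carrier G}"
  then obtain g where g: "g \<in> carrier G" "f' = col_act \<phi> E g f"
    by blast
  then have "f' = (\<lambda>f\<in>\<Phi>. col_act \<phi> E (inv (inv g)) f) f"
    using f by simp
  then show "f' \<in> orbit G (\<lambda>g. \<lambda>f\<in>\<Phi>. col_act \<phi> E (inv g) f) f"
    using g(1) inv_closed unfolding orbit_def by blast
qed

lemma (in group_action) burnside_col_orbits: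
  assumes "finite (carrier G)" "finite \<Phi>" "\<Phi> \<subseteq> extensional E"
    and closed: "\<And>g f. g \<in> carrier G \<Longrightarrow> f \<in> \<Phi> \<Longrightarrow> col_act \<phi> E g f \<in> \<Phi>"
  shows "card (col_orbits G \<phi> E \<Phi>) * order G = (\<Sum>g\<in>carrier G. card {f \<in> \<Phi>. col_act \<phi> E g f = f})"
proof -
  let ?\<psi> = "\<lambda>g. \<lambda>f\<in>\<Phi>. col_act \<phi> E (inv g) f"
  interpret coloring: group_action G \<Phi> ?\<psi>
    using assms(3) closed by (rule coloring_action)
  have "orbits G \<Phi> ?\<psi> = col_orbits G \<phi> E \<Phi>"
    using orbit_coloring_action unfolding orbits_def col_orbits_def Setcompr_eq_image
    by (rule image_cong[OF refl])
  moreover have "invariants \<Phi> ?\<psi> g = {f \<in> \<Phi>. col_act \<phi> E g f = f}" if "g \<in> carrier G" for g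
  proof -
    have "?\<psi> g f = f \<longleftrightarrow> col_act \<phi> E g f = f" if "f \<in> \<Phi>" for f
      using that \<open>g \<in> carrier G\<close> assms(3) col_act_inv_fixed_iff by auto
    then show ?thesis
      unfolding invariants_def by blast
  qed
  ultimately show ?thesis
    using coloring.burnside[OF assms(1,2)] by simp
qed

lemma (in group_action) col_orbits_restrict:
  assumes "\<Phi> \<subseteq> extensional E" "\<And>g f. g \<in> carrier G \<Longrightarrow> f \<in> \<Phi> \<Longrightarrow> P (col_act \<phi> E g f) = P f"
  shows "{Orb \<in> col_orbits G \<phi> E \<Phi>. \<forall>f\<in>Orb. P f} = col_orbits G \<phi> E {f \<in> \<Phi>. P f}"
proof -
  have "f \<in> {col_act \<phi> E g f | g. g \<in> carrier G}" if "f \<in> \<Phi>" for f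
  proof -
    have "col_act \<phi> E \<one> f = f"
      using that assms(1) by (intro col_act_one) auto
    then show ?thesis
      using one_closed by force
  qed
  moreover have "P f' = P f" if "f \<in> \<Phi>" "f' \<in> {col_act \<phi> E g f | g. g \<in> carrier G}" for f f'
    using that assms(2) by blast
  ultimately have "(\<forall>f'\<in>{col_act \<phi> E g f | g. g \<in> carrier G}. P f') \<longleftrightarrow> P f" if "f \<in> \<Phi>" for f
    using that by blast
  then show ?thesis
    unfolding col_orbits_def Setcompr_eq_image by blast
qed

section \<open>Partition-preserving actions\<close>

lemma valid_colorings_eq_PiE:
  assumes "X \<inter> Y = {}" "\<Omega>X \<inter> \<Omega>Y = {}"
  shows "valid_colorings X Y \<Omega>X \<Omega>Y = PiE (X \<union> Y) (\<lambda>a. if a \<in> X then \<Omega>X else \<Omega>Y)"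
proof -
  have "(c \<in> \<Omega>X \<union> \<Omega>Y \<and> (c \<in> \<Omega>X \<longleftrightarrow> a \<in> X) \<and> (c \<in> \<Omega>Y \<longleftrightarrow> a \<in> Y))
      \<longleftrightarrow> c \<in> (if a \<in> X then \<Omega>X else \<Omega>Y)" if "a \<in> X \<union> Y" for a c
    using assms that by auto
  then show ?thesis
    unfolding valid_colorings_def set_eq_iff mem_Collect_eq PiE_iff by blast
qed

lemma total_weight_eq_sum:
  assumes "finite (X \<union> Y)" "X \<inter> Y = {}"
  shows "total_weight X Y \<omega>X \<omega>Y f = (\<Sum>a\<in>X \<union> Y. (if a \<in> X then \<omega>X else \<omega>Y) (f a))"
proof -
  have "(\<Sum>a\<in>X \<union> Y. (if a \<in> X then \<omega>X else \<omega>Y) (f a))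
      = (\<Sum>a\<in>X. (if a \<in> X then \<omega>X else \<omega>Y) (f a)) + (\<Sum>a\<in>Y. (if a \<in> X then \<omega>X else \<omega>Y) (f a))"
    using assms by (intro sum.union_disjoint) auto
  also have "\<dots> = total_weight X Y \<omega>X \<omega>Y f"
    using assms(2) unfolding total_weight_def by (intro arg_cong2[where f = "(+)"] sum.cong) auto
  finally show ?thesis ..
qed

locale bipartite_coloring = group_action G "X \<union> Y" \<Gamma> for G and X Y :: "'a set" and \<Gamma> +
  fixes \<Omega>X \<Omega>Y :: "'c set" and \<omega>X \<omega>Y :: "'c \<Rightarrow> nat"
  assumes finite_group: "finite (carrier G)"
    and finite_points: "finite (X \<union> Y)" and disjoint_points: "X \<inter> Y = {}"
    and partition_preserving:
      "\<forall>g \<in> carrier G. \<forall>a \<in> X \<union> Y. (\<Gamma> g a \<in> X \<longleftrightarrow> a \<in> X) \<and> (\<Gamma> g a \<in> Y \<longleftrightarrow> a \<in> Y)"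
    and disjoint_colors: "\<Omega>X \<inter> \<Omega>Y = {}"
    and finite_weight_classes_X: "\<forall>i. finite {c \<in> \<Omega>X. \<omega>X c = i}"
    and finite_weight_classes_Y: "\<forall>i. finite {c \<in> \<Omega>Y. \<omega>Y c = i}"
begin

abbreviation "A \<equiv> X \<union> Y"
abbreviation "\<Phi> \<equiv> valid_colorings X Y \<Omega>X \<Omega>Y"
abbreviation "weight \<equiv> total_weight X Y \<omega>X \<omega>Y"

lemma bij_betw_points:
  assumes "g \<in> carrier G"
  shows "bij_betw (\<Gamma> g) A A"
  using bij_prop0[OF assms] by (simp add: Bij_def)

lemma image_subset_X: "g \<in> carrier G \<Longrightarrow> \<Gamma> g ` X \<subseteq> X"
  using partition_preserving by auto

lemma image_subset_Y: "g \<in> carrier G \<Longrightarrow> \<Gamma> g ` Y \<subseteq> Y"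
  using partition_preserving by auto

lemma valid_colorings_PiE: "\<Phi> = PiE A (\<lambda>a. if a \<in> X then \<Omega>X else \<Omega>Y)"
  using disjoint_points disjoint_colors by (rule valid_colorings_eq_PiE)

lemma weight_eq_sum: "weight f = (\<Sum>a\<in>A. (if a \<in> X then \<omega>X else \<omega>Y) (f a))"
  using finite_points disjoint_points by (rule total_weight_eq_sum)

lemma valid_colorings_extensional: "\<Phi> \<subseteq> extensional A"
  by (auto simp: valid_colorings_PiE PiE_iff)

lemma col_act_valid:
  assumes "g \<in> carrier G" "f \<in> \<Phi>"
  shows "col_act \<Gamma> A g f \<in> \<Phi>"
proof -
  have "f (\<Gamma> g a) \<in> (if a \<in> X then \<Omega>X else \<Omega>Y)" if "a \<in> A" for a
  proof -
    have "\<Gamma> g a \<in> A"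
      using assms(1) that refl by (rule element_image)
    then have "f (\<Gamma> g a) \<in> (if \<Gamma> g a \<in> X then \<Omega>X else \<Omega>Y)"
      by (rule PiE_mem[OF assms(2)[unfolded valid_colorings_PiE]])
    then show ?thesis
      using partition_preserving assms(1) that by simp
  qed
  then show ?thesis
    unfolding valid_colorings_PiE col_act_def restrict_PiE_iff ..
qed

lemma weight_col_act:
  assumes "g \<in> carrier G"
  shows "weight (col_act \<Gamma> A g f) = weight f"
proof -
  let ?W = "\<lambda>a. if a \<in> X then \<omega>X else \<omega>Y"
  have "weight (col_act \<Gamma> A g f) = (\<Sum>a\<in>A. ?W (\<Gamma> g a) (f (\<Gamma> g a)))"
    unfolding weight_eq_sum col_act_def using assms partition_preserving by (intro sum.cong) auto
  also have "\<dots> = weight f"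
    unfolding weight_eq_sum using bij_betw_points[OF assms] by (rule sum.reindex_bij_betw)
  finally show ?thesis .
qed

lemma finite_weight_class: "finite {f \<in> \<Phi>. weight f = w}"
  unfolding valid_colorings_PiE weight_eq_sum
  using finite_points finite_weight_classes_X finite_weight_classes_Y
  by (intro finite_PiE_weight_fibre) auto

lemma gen_fun_fixed_colorings:
  assumes "g \<in> carrier G"
  shows "gen_fun {f \<in> \<Phi>. col_act \<Gamma> A g f = f} weight
       = (\<Prod>k\<in>{1..card A}. (gen_fun \<Omega>X \<omega>X oo fps_X ^ k) ^ cycle_count X k (\<Gamma> g)
                              * (gen_fun \<Omega>Y \<omega>Y oo fps_X ^ k) ^ cycle_count Y k (\<Gamma> g)
           :: 'r::comm_semiring_1 fps)"
proof -
  let ?s = "\<Gamma> g"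
  let ?Q = "\<lambda>c. if c \<subseteq> X then \<Omega>X else \<Omega>Y"
  let ?V = "\<lambda>c. if c \<subseteq> X then \<omega>X else \<omega>Y"
  have cyc_X_iff: "cyc ?s a \<subseteq> X \<longleftrightarrow> a \<in> X" if "a \<in> A" for a
    using cyc_subset[OF image_subset_X[OF assms]] cyc_self[of a ?s] disjoint_points that by blast
  have palette: "\<Phi> = PiE A (\<lambda>a. ?Q (cyc ?s a))"
    unfolding valid_colorings_PiE using cyc_X_iff by (intro PiE_cong) auto
  have "col_act \<Gamma> A g f = f \<longleftrightarrow> (\<forall>a\<in>A. f (?s a) = f a)" if "f \<in> \<Phi>" for f
    using that valid_colorings_extensional by (intro col_act_fixed_iff) auto
  then have fixed: "{f \<in> \<Phi>. col_act \<Gamma> A g f = f} = {f \<in> PiE A (\<lambda>a. ?Q (cyc ?s a)). \<forall>a\<in>A. f (?s a) = f a}"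
    unfolding palette[symmetric] by blast
  have "gen_fun {f \<in> \<Phi>. col_act \<Gamma> A g f = f} weight
      = gen_fun {f \<in> PiE A (\<lambda>a. ?Q (cyc ?s a)). \<forall>a\<in>A. f (?s a) = f a} (\<lambda>f. \<Sum>a\<in>A. ?V (cyc ?s a) (f a))"
    using cyc_X_iff by (intro gen_fun_cong fixed) (simp add: weight_eq_sum)
  also have "\<dots> = (\<Prod>c\<in>cyc ?s ` A. gen_fun (?Q c) (?V c) oo fps_X ^ card c)"
    using finite_weight_classes_X finite_weight_classes_Y
    by (intro gen_fun_invariant_colorings finite_points bij_betw_points assms) auto
  also have "\<dots> = (\<Prod>c\<in>cyc ?s ` A. if c \<subseteq> X then gen_fun \<Omega>X \<omega>X oo fps_X ^ card c
                                          else gen_fun \<Omega>Y \<omega>Y oo fps_X ^ card c)"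
    by (intro prod.cong) auto
  also have "\<dots> = (\<Prod>k\<in>{1..card A}. (gen_fun \<Omega>X \<omega>X oo fps_X ^ k) ^ cycle_count X k ?s
                                  * (gen_fun \<Omega>Y \<omega>Y oo fps_X ^ k) ^ cycle_count Y k ?s)"
    using finite_points disjoint_points image_subset_X[OF assms] image_subset_Y[OF assms]
    by (rule prod_cycles_eq_cycle_monomial)
  finally show ?thesis .
qed

lemma card_weight_orbits:
  "card {Orb \<in> col_orbits G \<Gamma> A \<Phi>. \<forall>f\<in>Orb. weight f = w} * order G
     = (\<Sum>g\<in>carrier G. card {f \<in> {f \<in> \<Phi>. col_act \<Gamma> A g f = f}. weight f = w})"
proof -
  have "{Orb \<in> col_orbits G \<Gamma> A \<Phi>. \<forall>f\<in>Orb. weight f = w} = col_orbits G \<Gamma> A {f \<in> \<Phi>. weight f = w}"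
    using valid_colorings_extensional weight_col_act by (intro col_orbits_restrict) auto
  moreover have "card (col_orbits G \<Gamma> A {f \<in> \<Phi>. weight f = w}) * order G
      = (\<Sum>g\<in>carrier G. card {f \<in> {f \<in> \<Phi>. weight f = w}. col_act \<Gamma> A g f = f})"
    using finite_group finite_weight_class valid_colorings_extensional col_act_valid weight_col_act
    by (intro burnside_col_orbits) auto
  ultimately show ?thesis
    by (simp add: conj_ac)
qed

lemma orbit_gen_fun_eq_cycle_index:
  "Abs_fps (\<lambda>w. of_nat (card {Orb \<in> col_orbits G \<Gamma> A \<Phi>. \<forall>f\<in>Orb. weight f = w}))
     = (bip_cycle_index G \<Gamma> X Y (\<lambda>k. gen_fun \<Omega>X \<omega>X oo fps_X ^ k) (\<lambda>k. gen_fun \<Omega>Y \<omega>Y oo fps_X ^ k)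
        :: 'r::field_char_0 fps)"
proof -
  let ?Fix = "\<lambda>g. {f \<in> \<Phi>. col_act \<Gamma> A g f = f}"
  let ?N = "\<lambda>w. card {Orb \<in> col_orbits G \<Gamma> A \<Phi>. \<forall>f\<in>Orb. weight f = w}"
  have "bip_cycle_index G \<Gamma> X Y (\<lambda>k. gen_fun \<Omega>X \<omega>X oo fps_X ^ k) (\<lambda>k. gen_fun \<Omega>Y \<omega>Y oo fps_X ^ k)
      = fps_const (1 / of_nat (order G)) * (\<Sum>g\<in>carrier G. gen_fun (?Fix g) weight :: 'r fps)"
    unfolding bip_cycle_index_def order_def by (simp add: gen_fun_fixed_colorings cong: sum.cong)
  also have "\<dots> = Abs_fps (\<lambda>w. of_nat (?N w))"
  proof (rule fps_ext)
    fix w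
    have "of_nat (?N w) * of_nat (order G) = (\<Sum>g\<in>carrier G. of_nat (card {f \<in> ?Fix g. weight f = w}) :: 'r)"
      using card_weight_orbits[of w] by (simp flip: of_nat_mult of_nat_sum)
    moreover have "order G \<noteq> 0"
      using finite_group order_gt_0_iff_finite by simp
    ultimately show "(fps_const (1 / of_nat (order G)) * (\<Sum>g\<in>carrier G. gen_fun (?Fix g) weight)) $ w
        = Abs_fps (\<lambda>w. of_nat (?N w) :: 'r) $ w"
      by (simp add: fps_sum_nth field_simps)
  qed
  finally show ?thesis ..
qed

end

theorem theorem1:
  fixes G :: "('g, 'm) monoid_scheme"
    and \<Gamma> :: "'g \<Rightarrow> 'a \<Rightarrow> 'a"
    and X Y :: "'a set"
    and \<Omega>X \<Omega>Y :: "'c set"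
    and \<omega>X \<omega>Y :: "'c \<Rightarrow> nat"
  assumes "group G" and "finite (carrier G)"
    and "finite (X \<union> Y)" and "X \<inter> Y = {}"
    and "group_action G (X \<union> Y) \<Gamma>"
    and "\<forall>g \<in> carrier G. \<forall>a \<in> X \<union> Y. (\<Gamma> g a \<in> X \<longleftrightarrow> a \<in> X) \<and> (\<Gamma> g a \<in> Y \<longleftrightarrow> a \<in> Y)"
    and "\<Omega>X \<inter> \<Omega>Y = {}"
    and "\<forall>c \<in> \<Omega>X. \<omega>X c > 0" and "\<forall>c \<in> \<Omega>Y. \<omega>Y c > 0"
    and "\<forall>i. finite {c \<in> \<Omega>X. \<omega>X c = i}" and "\<forall>i. finite {c \<in> \<Omega>Y. \<omega>Y c = i}"
  shows "Abs_fps (\<lambda>w. of_nat (card {Orb \<in> col_orbits G \<Gamma> (X \<union> Y) (valid_colorings X Y \<Omega>X \<Omega>Y).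
              \<forall>\<phi> \<in> Orb. total_weight X Y \<omega>X \<omega>Y \<phi> = w}))
         = (bip_cycle_index G \<Gamma> X Y
              (\<lambda>k. gen_fun \<Omega>X \<omega>X oo fps_X ^ k)
              (\<lambda>k. gen_fun \<Omega>Y \<omega>Y oo fps_X ^ k) :: rat fps)"
proof -
  interpret bipartite_coloring G X Y \<Gamma> \<Omega>X \<Omega>Y \<omega>X \<omega>Y
    using assms unfolding bipartite_coloring_def bipartite_coloring_axioms_def by blast
  show ?thesis
    by (rule orbit_gen_fun_eq_cycle_index)
qed

end
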